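(* There exist topological dynamical systems $(X,T)$, $(Y,S)$ and a function $f\in C(X\times Y)$ such that, for the factor map $\pi:(X\times Y,T\times S)\to(Y,S)$, $\pi(x,y)=y$, we have $\alpha(f)=\beta(f)=\gamma(f)<\delta(f)$, and moreover $\alpha(f)<\beta^*(f)=\gamma^*(f)=\delta^*(f)=\delta(f)$.
   Context: A topological dynamical system is a pair $(X,T)$ with $X$ compact metrizable and $T$ a homeomorphism; $\mathcal{M}_T(X)$ is the set of $T$-invariant Borel probability measures. Write $Z=X\times Y$, $U=T\times S$. For $f\in C(Z)$: $\psi_f(\nu)=\min\{\int f\,d\lambda:\lambda\in\mathcal{M}_U(Z),\pi_*\lambda=\nu\}$ for $\nu\in\mathcal{M}_S(Y)$; $\alpha(f)=\sup_{\nu\in\mathcal{M}_S(Y)}\psi_f(\nu)$; with $\mathbb{A}_Jf=\frac{1}{|J|}\sum_{j\in J}f\circ U^j$ and $\mathbb{A}_k=\mathbb{A}_{[0,k-1]}$, let $R_f=\{z:\lim_k\mathbb{A}_kf(z)\text{ exists}\}$, $R_f^*=\{z:\lim_k\mathbb{A}_{[-k,k]}f(z)\text{ exists}\}$, and $\beta(f)=\sup_{y\in\pi(R_f)}\inf_{z\in R_f\cap\pi^{-1}\{y\}}\lim_k\mathbb{A}_kf(z)$, $\gamma(f)=\sup_{y\in Y}\inf_{z\in\pi^{-1}\{y\}}\limsup_k\mathbb{A}_kf(z)$, $\delta(f)=\limsup_k\max_{y\in Y}\min_{z\in\pi^{-1}\{y\}}\mathbb{A}_kf(z)$, $\beta^*(f)=\sup_{y\in\pi(R^*_f)}\inf_{z\in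 R^*_f\cap\pi^{-1}\{y\}}\lim_k\mathbb{A}_{[-k,k]}f(z)$, $\gamma^*(f)=\sup_{y\in Y}\inf_{z\in\pi^{-1}\{y\}}\limsup_k\mathbb{A}_{[-k,k]}f(z)$, $\delta^*(f)=\limsup_k\max_{y\in Y}\min_{z\in\pi^{-1}\{y\}}\mathbb{A}_{[-k,k]}f(z)$. *)

theory Defs
  imports "HOL-Analysis.Analysis" "HOL-Probability.Probability"
begin

text \<open>Ambient type: the countable product of the reals (metrizable, contains a copy of the
Hilbert cube, hence of every compact metrizable space).\<close>
type_synonym pt = "nat \<Rightarrow> real"

definition tds :: "'a::metric_space set \<Rightarrow> ('a \<Rightarrow> 'a) \<Rightarrow> bool" where
  "tds X T \<longleftrightarrow> compact X \<and> (\<exists>T'. homeomorphism X X T T')"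

definition inv_meas :: "'a::topological_space set \<Rightarrow> ('a \<Rightarrow> 'a) \<Rightarrow> 'a measure set" where
  "inv_meas X T = {\<mu>. sets \<mu> = sets (restrict_space borel X) \<and> prob_space \<mu>
       \<and> T \<in> measurable \<mu> \<mu> \<and> distr \<mu> \<mu> T = \<mu>}"

definition prodmap :: "('a \<Rightarrow> 'a) \<Rightarrow> ('b \<Rightarrow> 'b) \<Rightarrow> 'a \<times> 'b \<Rightarrow> 'a \<times> 'b" where
  "prodmap T S = (\<lambda>(x, y). (T x, S y))"

definition iter_int :: "'a set \<Rightarrow> ('a \<Rightarrow> 'a) \<Rightarrow> int \<Rightarrow> 'a \<Rightarrow> 'a" where
  "iter_int Z U j = (if 0 \<le> j then U ^^ nat j else inv_into Z U ^^ nat (- j))"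

text \<open>psi_f(nu) (the minimum is attained; written as an infimum).\<close>
definition psi :: "'a::topological_space set \<Rightarrow> ('a \<Rightarrow> 'a) \<Rightarrow> 'b::topological_space set
    \<Rightarrow> ('b \<Rightarrow> 'b) \<Rightarrow> ('a \<times> 'b \<Rightarrow> real) \<Rightarrow> 'b measure \<Rightarrow> real" where
  "psi X T Y S f \<nu> = Inf {integral\<^sup>L lam f | lam. lam \<in> inv_meas (X \<times> Y) (prodmap T S)
       \<and> distr lam (restrict_space borel Y) snd = \<nu>}"

definition alpha where
  "alpha X T Y S f = Sup (psi X T Y S f ` inv_meas Y S)"

definition avg :: "('a \<Rightarrow> 'a) \<Rightarrow> ('b \<Rightarrow> 'b) \<Rightarrow> ('a \<times> 'b \<Rightarrow> real) \<Rightarrow> nat \<Rightarrow> 'a \<times> 'b \<Rightarrow> real" where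
  "avg T S f k z = (\<Sum>j<k. f ((prodmap T S ^^ j) z)) / real k"

definition savg :: "'a set \<Rightarrow> ('a \<Rightarrow> 'a) \<Rightarrow> 'b set \<Rightarrow> ('b \<Rightarrow> 'b) \<Rightarrow> ('a \<times> 'b \<Rightarrow> real)
    \<Rightarrow> nat \<Rightarrow> 'a \<times> 'b \<Rightarrow> real" where
  "savg X T Y S f k z = (\<Sum>j\<in>{- int k..int k}. f (iter_int (X \<times> Y) (prodmap T S) j z)) / real (2 * k + 1)"

definition limsup_r :: "(nat \<Rightarrow> real) \<Rightarrow> real" where
  "limsup_r u = real_of_ereal (limsup (\<lambda>k. ereal (u k)))"

definition Rset where
  "Rset X T Y S f = {z \<in> X \<times> Y. convergent (\<lambda>k. avg T S f k z)}"

definition Rset_s where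
  "Rset_s X T Y S f = {z \<in> X \<times> Y. convergent (\<lambda>k. savg X T Y S f k z)}"

definition beta where
  "beta X T Y S f = Sup ((\<lambda>y. Inf ((\<lambda>z. lim (\<lambda>k. avg T S f k z)) `
       {z \<in> Rset X T Y S f. snd z = y})) ` (snd ` Rset X T Y S f))"

definition gamma where
  "gamma X T Y S f = Sup ((\<lambda>y. Inf ((\<lambda>z. limsup_r (\<lambda>k. avg T S f k z)) `
       {z \<in> X \<times> Y. snd z = y})) ` Y)"

text \<open>max/min are attained (compactness, continuity); written as Sup/Inf.\<close>
definition delta where
  "delta X T Y S f = limsup_r (\<lambda>k. Sup ((\<lambda>y. Inf ((\<lambda>z. avg T S f k z) `
       {z \<in> X \<times> Y. snd z = y})) ` Y))"

definition beta_s where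
  "beta_s X T Y S f = Sup ((\<lambda>y. Inf ((\<lambda>z. lim (\<lambda>k. savg X T Y S f k z)) `
       {z \<in> Rset_s X T Y S f. snd z = y})) ` (snd ` Rset_s X T Y S f))"

definition gamma_s where
  "gamma_s X T Y S f = Sup ((\<lambda>y. Inf ((\<lambda>z. limsup_r (\<lambda>k. savg X T Y S f k z)) `
       {z \<in> X \<times> Y. snd z = y})) ` Y)"

definition delta_s where
  "delta_s X T Y S f = limsup_r (\<lambda>k. Sup ((\<lambda>y. Inf ((\<lambda>z. savg X T Y S f k z) `
       {z \<in> X \<times> Y. snd z = y})) ` Y))"

end

theory Submission
  imports Defs "HOL-Real_Asymp.Real_Asymp"
begin

(* X = {0, 1} with the identity; Y = {tanh n | n \<in> \<int>} \<union> {-1, 1}, the closure of one orbit of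
   S t = (t + tanh 1) / (1 + t tanh 1), which is translation by 1 in the coordinate artanh and fixes
   -1 and 1; f (0, y) = h y and f (1, y) = 1 - h y, where h is a continuous cutoff with
   h (tanh n) = 1 for n < 0, h (tanh n) = 0 for n \<ge> 0, h 1 = 0 and h (-1) = 1.
   The orbit is wandering, so every invariant measure lives on {-1, 1}, where the section
   y \<mapsto> (h y, y) is invariant and f vanishes on it: alpha = 0.  Forward averages at (0, tanh n) tend
   to 0, so beta = gamma = 0; but at time 2m the point tanh (-m) has spent half of its time on each
   side of 0, so both points of its fibre have average 1/2, and delta = 1/2.  Over an orbit point
   both symmetric averages tend to 1/2, and the fibre minimum never exceeds 1/2 because the two
   averages add up to 1, so beta* = gamma* = delta* = 1/2. *)

section \<open>Topological dynamical systems\<close>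

lemma tdsI:
  fixes T :: "'a::metric_space \<Rightarrow> 'a"
  assumes "compact X" "continuous_on X T" "T ` X = X" "inj_on T X"
  shows "tds X T"
  using homeomorphism_compact[OF assms] assms(1) unfolding tds_def by blast

lemma continuous_on_prodmap:
  assumes "continuous_on X T" and "continuous_on Y S"
  shows "continuous_on (X \<times> Y) (prodmap T S)"
proof -
  have "prodmap T S = (\<lambda>z. (T (fst z), S (snd z)))" by (auto simp: prodmap_def)
  moreover have "continuous_on (X \<times> Y) (\<lambda>z. (T (fst z), S (snd z)))"
    by (intro continuous_intros continuous_on_compose2[OF assms(1)] continuous_on_compose2[OF assms(2)]) auto
  ultimately show ?thesis by simp
qed

lemma funpow_prodmap_id: "(prodmap (\<lambda>x. x) S ^^ j) (x, y) = (x, (S ^^ j) y)"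
  by (induction j) (simp_all add: prodmap_def)

lemma iter_int_prodmap_id:
  assumes inj: "inj_on S Y" and onto: "S ` Y = Y" and "x \<in> X" "y \<in> Y"
  shows "iter_int (X \<times> Y) (prodmap (\<lambda>x. x) S) j (x, y) = (x, iter_int Y S j y)"
proof -
  let ?U = "prodmap (\<lambda>x. x) S"
  have inv_U: "inv_into (X \<times> Y) ?U (x, y') = (x, inv_into Y S y')" if "y' \<in> Y" for y'
  proof (rule inv_into_f_eq)
    show "inj_on ?U (X \<times> Y)" using inj by (auto simp: inj_on_def prodmap_def)
    show "(x, inv_into Y S y') \<in> X \<times> Y" using \<open>x \<in> X\<close> that onto by (metis inv_into_into mem_Sigma_iff)
    show "?U (x, inv_into Y S y') = (x, y')" using that onto by (simp add: prodmap_def f_inv_into_f)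
  qed
  have in_Y: "(inv_into Y S ^^ m) y \<in> Y" for m
    by (induction m) (use \<open>y \<in> Y\<close> onto in \<open>auto intro: inv_into_into\<close>)
  have "(inv_into (X \<times> Y) ?U ^^ m) (x, y) = (x, (inv_into Y S ^^ m) y)" for m
    by (induction m) (simp_all add: inv_U in_Y)
  then show ?thesis unfolding iter_int_def by (simp add: funpow_prodmap_id)
qed

lemma funpow_orbit:
  assumes "\<And>n. S (orb n) = orb (n + 1)"
  shows "(S ^^ m) (orb n) = orb (n + int m)"
  by (induction m) (simp_all add: assms algebra_simps)

lemma iter_int_orbit:
  assumes inj: "inj_on S Y" and "range orb \<subseteq> Y" and step: "\<And>n. S (orb n) = orb (n + 1)"
  shows "iter_int Y S j (orb n) = orb (n + j)"
proof -
  have inv_S: "inv_into Y S (orb n) = orb (n - 1)" for n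
    by (rule inv_into_f_eq[OF inj]) (use assms(2) step[of "n - 1"] in auto)
  have "(inv_into Y S ^^ m) (orb n) = orb (n - int m)" for m
    by (induction m) (simp_all add: inv_S algebra_simps)
  then show ?thesis unfolding iter_int_def using funpow_orbit[of S orb, OF step] by simp
qed

section \<open>Upper limits and fibrewise extrema\<close>

lemma limsup_r_eq_of_tendsto:
  assumes "u \<longlonglongrightarrow> c"
  shows "limsup_r u = c"
proof -
  have "limsup (\<lambda>k. ereal (u k)) = ereal c"
    by (rule lim_imp_Limsup) (use assms in auto)
  then show ?thesis unfolding limsup_r_def by simp
qed

lemma limsup_r_eq_of_subseq:
  assumes upper: "\<And>k. u k \<le> c" and r: "strict_mono r"
    and lower: "\<And>k. l k \<le> u (r k)" and l: "l \<longlonglongrightarrow> c"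
  shows "limsup_r u = c"
proof -
  have "limsup (\<lambda>k. ereal (u k)) \<le> ereal c"
    by (rule Limsup_bounded) (use upper in auto)
  moreover have "ereal c = limsup (\<lambda>k. ereal (l k))"
    by (rule lim_imp_Limsup[symmetric]) (use l in auto)
  moreover have "limsup (\<lambda>k. ereal (l k)) \<le> limsup ((\<lambda>k. ereal (u k)) \<circ> r)"
    by (rule Limsup_mono) (use lower in auto)
  moreover have "limsup ((\<lambda>k. ereal (u k)) \<circ> r) \<le> limsup (\<lambda>k. ereal (u k))"
    by (rule limsup_subseq_mono[OF r])
  ultimately have "limsup (\<lambda>k. ereal (u k)) = ereal c" by auto
  then show ?thesis unfolding limsup_r_def by simp
qed

lemma beta_eq_Sup_Inf_lim:
  assumes "X \<noteq> {}" and "\<And>z. z \<in> X \<times> Y \<Longrightarrow> convergent (\<lambda>k. avg T S f k z)"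
  shows "beta X T Y S f = (SUP y\<in>Y. INF z\<in>{z \<in> X \<times> Y. snd z = y}. lim (\<lambda>k. avg T S f k z))"
proof -
  have "Rset X T Y S f = X \<times> Y" using assms(2) by (auto simp: Rset_def)
  then show ?thesis unfolding beta_def using assms(1) by simp
qed

lemma beta_s_eq_Sup_Inf_lim:
  assumes "X \<noteq> {}" and "\<And>z. z \<in> X \<times> Y \<Longrightarrow> convergent (\<lambda>k. savg X T Y S f k z)"
  shows "beta_s X T Y S f = (SUP y\<in>Y. INF z\<in>{z \<in> X \<times> Y. snd z = y}. lim (\<lambda>k. savg X T Y S f k z))"
proof -
  have "Rset_s X T Y S f = X \<times> Y" using assms(2) by (auto simp: Rset_s_def)
  then show ?thesis unfolding beta_s_def using assms(1) by simp
qed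

lemma limsup_r_eq_lim: "convergent u \<Longrightarrow> limsup_r u = lim u"
  by (simp add: convergent_LIMSEQ_iff limsup_r_eq_of_tendsto)

lemma gamma_eq_Sup_Inf_lim:
  assumes "\<And>z. z \<in> X \<times> Y \<Longrightarrow> convergent (\<lambda>k. avg T S f k z)"
  shows "gamma X T Y S f = (SUP y\<in>Y. INF z\<in>{z \<in> X \<times> Y. snd z = y}. lim (\<lambda>k. avg T S f k z))"
proof -
  have "limsup_r (\<lambda>k. avg T S f k z) = lim (\<lambda>k. avg T S f k z)" if "z \<in> X \<times> Y" for z
    using assms[OF that] by (rule limsup_r_eq_lim)
  then show ?thesis unfolding gamma_def by (intro arg_cong[where f = Sup] image_cong refl) auto
qed

lemma gamma_s_eq_Sup_Inf_lim:
  assumes "\<And>z. z \<in> X \<times> Y \<Longrightarrow> convergent (\<lambda>k. savg X T Y S f k z)"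
  shows "gamma_s X T Y S f = (SUP y\<in>Y. INF z\<in>{z \<in> X \<times> Y. snd z = y}. lim (\<lambda>k. savg X T Y S f k z))"
proof -
  have "limsup_r (\<lambda>k. savg X T Y S f k z) = lim (\<lambda>k. savg X T Y S f k z)" if "z \<in> X \<times> Y" for z
    using assms[OF that] by (rule limsup_r_eq_lim)
  then show ?thesis unfolding gamma_s_def by (intro arg_cong[where f = Sup] image_cong refl) auto
qed

lemma Inf_fiber_two_points:
  fixes F :: "'a \<times> 'b \<Rightarrow> real"
  assumes "y \<in> Y"
  shows "Inf (F ` {z \<in> {p, q} \<times> Y. snd z = y}) = min (F (p, y)) (F (q, y))"
proof -
  have "{z \<in> {p, q} \<times> Y. snd z = y} = {(p, y), (q, y)}" using assms by auto
  then show ?thesis by (simp add: cInf_insert inf_min)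
qed

section \<open>Invariant measures\<close>

lemma measurable_restrict_borel_of_continuous:
  assumes "continuous_on A f" and "f ` A \<subseteq> B"
  shows "f \<in> measurable (restrict_space borel A) (restrict_space borel B)"
proof (rule measurable_restrict_space2)
  show "f \<in> space (restrict_space borel A) \<rightarrow> B" using assms(2) by (auto simp: space_restrict_space)
  show "f \<in> borel_measurable (restrict_space borel A)"
    by (rule borel_measurable_continuous_on_restrict[OF assms(1)])
qed

lemma measurable_inv_meas_of_continuous:
  assumes "\<nu> \<in> inv_meas Y S" and "continuous_on Y g" and "g ` Y \<subseteq> B"
  shows "g \<in> measurable \<nu> (restrict_space borel B)"
proof -
  have sets: "sets \<nu> = sets (restrict_space borel Y)" using assms(1) unfolding inv_meas_def by simp
  show ?thesis
    unfolding measurable_cong_sets[OF sets refl] by (rule measurable_restrict_borel_of_continuous[OF assms(2,3)])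
qed

lemma space_inv_meas:
  assumes "\<mu> \<in> inv_meas X T"
  shows "space \<mu> = X"
proof -
  have "sets \<mu> = sets (restrict_space borel X)" using assms unfolding inv_meas_def by simp
  then have "space \<mu> = space (restrict_space borel X)" by (rule sets_eq_imp_space_eq)
  then show ?thesis by (simp add: space_restrict_space)
qed

lemma return_in_inv_meas:
  assumes "continuous_on Y S" "S ` Y \<subseteq> Y" "y \<in> Y" "S y = y"
  shows "return (restrict_space borel Y) y \<in> inv_meas Y S"
proof -
  let ?M = "restrict_space borel Y"
  have y: "y \<in> space ?M" using assms(3) by (simp add: space_restrict_space)
  have S: "S \<in> measurable ?M ?M" by (rule measurable_restrict_borel_of_continuous[OF assms(1,2)])
  then have S_return: "S \<in> measurable (return ?M y) (return ?M y)"
    using measurable_cong_sets[of "return ?M y" ?M "return ?M y" ?M] by simp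
  have "distr (return ?M y) (return ?M y) S = distr (return ?M y) ?M S"
    by (rule distr_cong) auto
  also have "\<dots> = return ?M (S y)" by (rule distr_return[OF S y])
  also have "\<dots> = return ?M y" by (simp add: assms(4))
  finally show ?thesis unfolding inv_meas_def using S_return prob_space_return[OF y] by simp
qed

lemma singleton_in_sets_restrict_borel:
  fixes y :: "'a::t1_space"
  assumes "y \<in> Y"
  shows "{y} \<in> sets (restrict_space borel Y)"
  unfolding sets_restrict_space
proof (rule image_eqI)
  show "{y} = Y \<inter> {y}" using assms by auto
  show "{y} \<in> sets borel" by (intro borel_closed closed_singleton)
qed

lemma emeasure_wandering_orbit:
  fixes orb :: "int \<Rightarrow> 'a::t1_space"
  assumes \<nu>: "\<nu> \<in> inv_meas Y S" and inj: "inj_on S Y"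
    and orb: "inj orb" "range orb \<subseteq> Y" and step: "\<And>n. S (orb n) = orb (n + 1)"
  shows "emeasure \<nu> {orb n} = 0"
proof -
  have sets: "sets \<nu> = sets (restrict_space borel Y)" and "prob_space \<nu>"
    and S: "S \<in> measurable \<nu> \<nu>" and inv: "distr \<nu> \<nu> S = \<nu>"
    using \<nu> unfolding inv_meas_def by auto
  interpret prob_space \<nu> by fact
  have space: "space \<nu> = Y" by (rule space_inv_meas[OF \<nu>])
  have sing: "{orb n} \<in> sets \<nu>" for n
    unfolding sets using orb(2) by (intro singleton_in_sets_restrict_borel) auto
  have shift: "measure \<nu> {orb (n + 1)} = measure \<nu> {orb n}" for n
  proof -
    have "S -` {orb (n + 1)} \<inter> Y = {orb n}"
      using inj_onD[OF inj, of _ "orb n"] orb(2) step[of n] by auto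
    then show ?thesis using measure_distr[OF S sing, of "n + 1"] by (simp add: inv space)
  qed
  have const: "measure \<nu> {orb n} = measure \<nu> {orb 0}" for n
  proof (induction n rule: int_induct[where k = 0])
    case (step1 i)
    then show ?case using shift[of i] by linarith
  next
    case (step2 i)
    have "measure \<nu> {orb i} = measure \<nu> {orb (i - 1)}" using shift[of "i - 1"] by simp
    then show ?case using step2 by linarith
  qed simp
  have "measure \<nu> {orb 0} = 0"
  proof (rule ccontr)
    assume "measure \<nu> {orb 0} \<noteq> 0"
    then have pos: "measure \<nu> {orb 0} > 0" using measure_nonneg[of \<nu> "{orb 0}"] by linarith
    obtain N :: nat where N: "1 < real N * measure \<nu> {orb 0}"
      using ex_less_of_nat_mult[OF pos] by blast
    have "measure \<nu> (orb ` {0..<int N}) = (\<Sum>x \<in> orb ` {0..<int N}. measure \<nu> {x})"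
      by (rule finite_measure_eq_sum_singleton) (auto intro: sing)
    also have "\<dots> = (\<Sum>n \<in> {0..<int N}. measure \<nu> {orb n})"
      by (rule sum.reindex[OF inj_on_subset[OF orb(1) subset_UNIV], unfolded comp_def])
    also have "\<dots> = (\<Sum>n \<in> {0..<int N}. measure \<nu> {orb 0})" by (rule sum.cong[OF refl const])
    also have "\<dots> = real N * measure \<nu> {orb 0}" by simp
    finally show False using prob_le_1[of "orb ` {0..<int N}"] N by linarith
  qed
  then have "measure \<nu> {orb n} = 0" using const[of n] by linarith
  then show ?thesis unfolding emeasure_eq_measure by simp
qed

lemma AE_notin_wandering_orbit:
  fixes orb :: "int \<Rightarrow> 'a::t1_space"
  assumes \<nu>: "\<nu> \<in> inv_meas Y S" and inj: "inj_on S Y"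
    and orb: "inj orb" "range orb \<subseteq> Y" and step: "\<And>n. S (orb n) = orb (n + 1)"
  shows "AE y in \<nu>. y \<notin> range orb"
proof (rule AE_discrete_difference)
  show "countable (range orb)" by simp
  show "emeasure \<nu> {x} = 0" if "x \<in> range orb" for x
    using that by (auto simp: emeasure_wandering_orbit[of \<nu> Y S orb, OF \<nu> inj orb step])
  show "{x} \<in> sets \<nu>" if "x \<in> range orb" for x
    using \<nu> orb(2) that singleton_in_sets_restrict_borel[of x Y] unfolding inv_meas_def by auto
qed

lemma distr_section_in_inv_meas:
  fixes \<phi> :: "'b::topological_space \<Rightarrow> 'a::topological_space \<times> 'b"
  assumes \<nu>: "\<nu> \<in> inv_meas Y S"
    and U: "continuous_on (X \<times> Y) (prodmap T S)" "prodmap T S ` (X \<times> Y) \<subseteq> X \<times> Y"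
    and \<phi>: "continuous_on Y \<phi>" "\<phi> ` Y \<subseteq> X \<times> Y"
    and equivariant: "AE y in \<nu>. prodmap T S (\<phi> y) = \<phi> (S y)"
  shows "distr \<nu> (restrict_space borel (X \<times> Y)) \<phi> \<in> inv_meas (X \<times> Y) (prodmap T S)"
proof -
  let ?Z = "restrict_space borel (X \<times> Y)" and ?U = "prodmap T S"
  let ?\<mu> = "distr \<nu> ?Z \<phi>"
  have "prob_space \<nu>" and S: "S \<in> measurable \<nu> \<nu>" and inv: "distr \<nu> \<nu> S = \<nu>"
    using \<nu> unfolding inv_meas_def by auto
  have m\<phi>: "\<phi> \<in> measurable \<nu> ?Z" by (rule measurable_inv_meas_of_continuous[OF \<nu> \<phi>])
  have mU: "?U \<in> measurable ?Z ?Z" by (rule measurable_restrict_borel_of_continuous[OF U])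
  have sets_\<mu>: "sets ?\<mu> = sets ?Z" by simp
  have "distr ?\<mu> ?\<mu> ?U = distr ?\<mu> ?Z ?U" by (rule distr_cong) auto
  also have "\<dots> = distr \<nu> ?Z (?U \<circ> \<phi>)" by (rule distr_distr[OF mU m\<phi>])
  also have "\<dots> = distr \<nu> ?Z (\<phi> \<circ> S)"
    by (rule distr_cong_AE) (use equivariant m\<phi> mU S in \<open>auto intro: measurable_comp\<close>)
  also have "\<dots> = distr (distr \<nu> \<nu> S) ?Z \<phi>" by (rule distr_distr[OF m\<phi> S, symmetric])
  finally have "distr ?\<mu> ?\<mu> ?U = ?\<mu>" unfolding inv .
  moreover have "prob_space ?\<mu>" by (rule prob_space.prob_space_distr[OF \<open>prob_space \<nu>\<close> m\<phi>])
  moreover have "?U \<in> measurable ?\<mu> ?\<mu>" using mU measurable_cong_sets[OF sets_\<mu> sets_\<mu>] by simp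
  ultimately show ?thesis unfolding inv_meas_def by simp
qed

lemma distr_snd_distr_section:
  fixes \<phi> :: "'b::topological_space \<Rightarrow> 'a::topological_space \<times> 'b"
  assumes \<nu>: "\<nu> \<in> inv_meas Y S"
    and \<phi>: "continuous_on Y \<phi>" "\<phi> ` Y \<subseteq> X \<times> Y" and snd_\<phi>: "\<And>y. y \<in> Y \<Longrightarrow> snd (\<phi> y) = y"
  shows "distr (distr \<nu> (restrict_space borel (X \<times> Y)) \<phi>) (restrict_space borel Y) snd = \<nu>"
proof -
  let ?Z = "restrict_space borel (X \<times> Y)"
  have sets: "sets \<nu> = sets (restrict_space borel Y)" using \<nu> unfolding inv_meas_def by auto
  have m\<phi>: "\<phi> \<in> measurable \<nu> ?Z" by (rule measurable_inv_meas_of_continuous[OF \<nu> \<phi>])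
  have msnd: "snd \<in> measurable ?Z (restrict_space borel Y)"
    by (rule measurable_restrict_borel_of_continuous) (auto intro: continuous_on_snd continuous_on_id)
  have "distr (distr \<nu> ?Z \<phi>) (restrict_space borel Y) snd = distr \<nu> (restrict_space borel Y) (snd \<circ> \<phi>)"
    by (rule distr_distr[OF msnd m\<phi>])
  also have "\<dots> = distr \<nu> (restrict_space borel Y) (\<lambda>y. y)"
    by (rule distr_cong) (auto simp: snd_\<phi> space_inv_meas[OF \<nu>])
  also have "\<dots> = \<nu>" by (rule distr_id2) (simp add: sets)
  finally show ?thesis .
qed

lemma psi_eq_0_of_nonneg:
  assumes nonneg: "\<And>z. z \<in> X \<times> Y \<Longrightarrow> 0 \<le> f z"
    and \<mu>: "\<mu> \<in> inv_meas (X \<times> Y) (prodmap T S)" "distr \<mu> (restrict_space borel Y) snd = \<nu>"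
    and zero: "integral\<^sup>L \<mu> f = 0"
  shows "psi X T Y S f \<nu> = 0"
  unfolding psi_def
proof (rule cInf_eq_minimum)
  show "0 \<in> {integral\<^sup>L \<mu>' f |\<mu>'. \<mu>' \<in> inv_meas (X \<times> Y) (prodmap T S)
      \<and> distr \<mu>' (restrict_space borel Y) snd = \<nu>}"
    using \<mu> zero by force
  fix v assume "v \<in> {integral\<^sup>L \<mu>' f |\<mu>'. \<mu>' \<in> inv_meas (X \<times> Y) (prodmap T S)
      \<and> distr \<mu>' (restrict_space borel Y) snd = \<nu>}"
  then obtain \<mu>' where \<mu>': "\<mu>' \<in> inv_meas (X \<times> Y) (prodmap T S)" and v: "v = integral\<^sup>L \<mu>' f"
    by blast
  have "AE z in \<mu>'. 0 \<le> f z"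
    using nonneg by (intro AE_I2) (simp add: space_inv_meas[OF \<mu>'])
  then show "0 \<le> v" unfolding v by (rule integral_nonneg_AE)
qed

lemma psi_eq_0_of_zero_section:
  fixes \<phi> :: "'b::topological_space \<Rightarrow> 'a::topological_space \<times> 'b"
  assumes \<nu>: "\<nu> \<in> inv_meas Y S"
    and U: "continuous_on (X \<times> Y) (prodmap T S)" "prodmap T S ` (X \<times> Y) \<subseteq> X \<times> Y"
    and \<phi>: "continuous_on Y \<phi>" "\<phi> ` Y \<subseteq> X \<times> Y" "\<And>y. y \<in> Y \<Longrightarrow> snd (\<phi> y) = y"
    and equivariant: "AE y in \<nu>. prodmap T S (\<phi> y) = \<phi> (S y)"
    and f: "continuous_on (X \<times> Y) f" "\<And>z. z \<in> X \<times> Y \<Longrightarrow> 0 \<le> f z" "\<And>y. y \<in> Y \<Longrightarrow> f (\<phi> y) = 0"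
  shows "psi X T Y S f \<nu> = 0"
proof (rule psi_eq_0_of_nonneg[OF f(2)])
  let ?\<mu> = "distr \<nu> (restrict_space borel (X \<times> Y)) \<phi>"
  show "?\<mu> \<in> inv_meas (X \<times> Y) (prodmap T S)"
    by (rule distr_section_in_inv_meas[OF \<nu> U \<phi>(1,2) equivariant])
  show "distr ?\<mu> (restrict_space borel Y) snd = \<nu>"
    by (rule distr_snd_distr_section[OF \<nu> \<phi>])
  have "integral\<^sup>L ?\<mu> f = integral\<^sup>L \<nu> (\<lambda>y. f (\<phi> y))"
    by (rule integral_distr[OF measurable_inv_meas_of_continuous[OF \<nu> \<phi>(1,2)]])
      (rule borel_measurable_continuous_on_restrict[OF f(1)])
  also have "\<dots> = integral\<^sup>L \<nu> (\<lambda>y. 0)"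
    by (intro Bochner_Integration.integral_cong) (simp_all add: f(3) space_inv_meas[OF \<nu>])
  finally show "integral\<^sup>L ?\<mu> f = 0" by simp
qed

section \<open>The example system\<close>

lemma tanh_1_bounds: "0 < tanh (1::real)" "tanh (1::real) < 1"
  by (simp_all add: tanh_real_lt_1)

lemma tanh_1_ne: "1 + tanh (1::real) \<noteq> 0" "1 - tanh (1::real) \<noteq> 0" "tanh (1::real) \<noteq> 0"
  using tanh_1_bounds by linarith+

definition tanh_shift :: "real \<Rightarrow> real" where
  "tanh_shift t = (t + tanh 1) / (1 + tanh 1 * t)"

lemma tanh_shift_tanh: "tanh_shift (tanh x) = tanh (x + 1)"
  unfolding tanh_shift_def by (simp add: tanh_add)

lemma tanh_shift_fixpoints: "tanh_shift 1 = 1" "tanh_shift (-1) = -1"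
  using tanh_1_ne unfolding tanh_shift_def by (simp_all add: divide_eq_eq)

lemma tanh_shift_denominator_pos:
  fixes t :: real
  assumes "t \<in> {-1..1}"
  shows "0 < 1 + tanh 1 * t"
  using assms tanh_1_bounds mult_left_mono[of "-1" t "tanh 1"] by auto

lemma inj_on_tanh_shift: "inj_on tanh_shift {-1..1}"
proof (rule inj_onI)
  fix s t :: real assume s: "s \<in> {-1..1}" and t: "t \<in> {-1..1}" and eq: "tanh_shift s = tanh_shift t"
  let ?c = "tanh (1::real)"
  have "(s + ?c) * (1 + ?c * t) = (t + ?c) * (1 + ?c * s)"
    using eq tanh_shift_denominator_pos[OF s] tanh_shift_denominator_pos[OF t]
    unfolding tanh_shift_def by (simp add: divide_eq_eq)
  then have "(s - t) * (1 - ?c\<^sup>2) = 0" by (simp add: algebra_simps power2_eq_square)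
  moreover have "?c\<^sup>2 < 1" using tanh_1_bounds by (simp add: power_less_one_iff abs_less_iff)
  ultimately show "s = t" by simp
qed

definition cutoff :: "real \<Rightarrow> real" where
  "cutoff t = min 1 (max 0 (- t / tanh 1))"

lemma cutoff_tanh_int: "cutoff (tanh (of_int n)) = (if n < 0 then 1 else 0)"
proof (cases "n < 0")
  case True
  then have "tanh (real_of_int n) \<le> tanh (-1)" by (simp only: tanh_real_le_iff)
  then have "tanh 1 / tanh 1 \<le> - tanh (real_of_int n) / tanh 1"
    using tanh_1_bounds(1) by (intro divide_right_mono) simp_all
  then have "1 \<le> - tanh (real_of_int n) / tanh 1" using tanh_1_ne(3) by simp
  then show ?thesis using True unfolding cutoff_def by simp
next
  case False
  then have "0 \<le> tanh (real_of_int n) / tanh 1"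
    using tanh_1_bounds(1) by (intro divide_nonneg_pos) simp_all
  then show ?thesis using False unfolding cutoff_def by simp
qed

lemma cutoff_fixpoints: "cutoff 1 = 0" "cutoff (-1) = 1"
proof -
  have "1 \<le> 1 / tanh (1::real)" using tanh_1_bounds by (simp add: le_divide_eq)
  then show "cutoff 1 = 0" "cutoff (-1) = 1" unfolding cutoff_def by simp_all
qed

definition cseq :: "real \<Rightarrow> pt" where
  "cseq t = (\<lambda>_. t)"

lemma cseq_apply [simp]: "cseq t i = t"
  by (simp add: cseq_def)

lemma cseq_eq_iff [simp]: "cseq s = cseq t \<longleftrightarrow> s = t"
  by (metis cseq_apply)

lemma continuous_on_cseq [continuous_intros]:
  "continuous_on A g \<Longrightarrow> continuous_on A (\<lambda>x. cseq (g x))"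
  unfolding cseq_def by (intro continuous_intros)

lemma continuous_on_apply_0 [continuous_intros]: "continuous_on A (\<lambda>y::pt. y 0)"
  by (rule continuous_on_subset[OF continuous_on_product_coordinates]) auto

definition ex_orb :: "int \<Rightarrow> pt" where
  "ex_orb n = cseq (tanh (of_int n))"

definition ex_X :: "pt set" where
  "ex_X = {cseq 0, cseq 1}"

definition ex_Y :: "pt set" where
  "ex_Y = insert (cseq 1) (insert (cseq (-1)) (range ex_orb))"

definition ex_S :: "pt \<Rightarrow> pt" where
  "ex_S y = cseq (tanh_shift (y 0))"

definition ex_f :: "pt \<times> pt \<Rightarrow> real" where
  "ex_f z = (1 - fst z 0) * cutoff (snd z 0) + fst z 0 * (1 - cutoff (snd z 0))"

lemma cseq_in_ex_X [simp]: "cseq 0 \<in> ex_X" "cseq 1 \<in> ex_X"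
  by (simp_all add: ex_X_def)

lemma ex_X_nonempty: "ex_X \<noteq> {}"
  by (simp add: ex_X_def)

lemma ex_S_orb: "ex_S (ex_orb n) = ex_orb (n + 1)"
  unfolding ex_S_def ex_orb_def by (simp add: tanh_shift_tanh)

lemma ex_S_fixpoints: "ex_S (cseq 1) = cseq 1" "ex_S (cseq (-1)) = cseq (-1)"
  unfolding ex_S_def by (simp_all add: tanh_shift_fixpoints)

lemma inj_ex_orb: "inj ex_orb"
  by (rule injI) (simp add: ex_orb_def)

lemma range_ex_orb_subset: "range ex_orb \<subseteq> ex_Y"
  unfolding ex_Y_def by blast

lemma ex_Y_cases:
  assumes "y \<in> ex_Y"
  obtains n where "y = ex_orb n" | "y = cseq 1" | "y = cseq (-1)"
  using assms unfolding ex_Y_def by blast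

lemma ex_Y_cseq: "y \<in> ex_Y \<Longrightarrow> y = cseq (y 0) \<and> y 0 \<in> {-1..1}"
  by (elim ex_Y_cases) (auto simp: ex_orb_def less_imp_le tanh_real_lt_1 tanh_real_gt_neg1)

lemma compact_ex_Y: "compact ex_Y"
proof -
  let ?up = "\<lambda>m. tanh (real m)" and ?down = "\<lambda>m. tanh (- real m)"
  have up: "?up \<longlonglongrightarrow> 1"
    by (rule filterlim_compose[OF tanh_real_at_top filterlim_real_sequentially])
  then have down: "?down \<longlonglongrightarrow> -1"
    by (simp add: tendsto_minus_cancel_left)
  have "tanh (real_of_int n) \<in> range ?up \<union> range ?down" for n
  proof (cases "0 \<le> n")
    case True
    then have "real_of_int n = real (nat n)" by simp
    then show ?thesis by (metis UnI1 rangeI)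
  next
    case False
    then have "real_of_int n = - real (nat (- n))" by simp
    then show ?thesis by (metis UnI2 rangeI)
  qed
  moreover have "range ?up \<union> range ?down \<subseteq> range (\<lambda>n::int. tanh (real_of_int n))"
    by (auto intro: range_eqI[of _ _ "int _"] range_eqI[of _ _ "- int _"])
  ultimately have Y: "ex_Y = cseq ` (insert 1 (range ?up) \<union> insert (-1) (range ?down))"
    unfolding ex_Y_def ex_orb_def by (auto simp: image_iff)
  have "compact (insert 1 (range ?up) \<union> insert (-1) (range ?down))"
    by (intro compact_Un compact_sequence_with_limit up down)
  then show ?thesis
    unfolding Y by (rule compact_continuous_image[rotated]) (use continuous_on_cseq[OF continuous_on_id] in simp)
qed

lemma ex_S_in_ex_Y: "y \<in> ex_Y \<Longrightarrow> ex_S y \<in> ex_Y"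
  by (elim ex_Y_cases) (auto simp: ex_S_orb ex_S_fixpoints ex_Y_def)

lemma continuous_on_ex_S: "continuous_on ex_Y ex_S"
proof -
  have "1 + tanh 1 * y 0 \<noteq> 0" if "y \<in> ex_Y" for y
    using tanh_shift_denominator_pos ex_Y_cseq[OF that] by (metis less_irrefl)
  then show ?thesis unfolding ex_S_def tanh_shift_def by (intro continuous_intros) auto
qed

lemma ex_S_image: "ex_S ` ex_Y = ex_Y"
proof (intro equalityI subsetI)
  fix y assume "y \<in> ex_S ` ex_Y"
  then show "y \<in> ex_Y" using ex_S_in_ex_Y by blast
next
  fix y assume "y \<in> ex_Y"
  then show "y \<in> ex_S ` ex_Y"
  proof (cases rule: ex_Y_cases)
    case (1 n)
    then have "y = ex_S (ex_orb (n - 1))" by (simp add: ex_S_orb)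
    then show ?thesis using range_ex_orb_subset by blast
  qed (use ex_S_fixpoints in \<open>auto simp: ex_Y_def\<close>)
qed

lemma inj_on_ex_S: "inj_on ex_S ex_Y"
proof (rule inj_onI)
  fix y y' assume y: "y \<in> ex_Y" and y': "y' \<in> ex_Y" and "ex_S y = ex_S y'"
  then have "tanh_shift (y 0) = tanh_shift (y' 0)" by (simp add: ex_S_def)
  then have "y 0 = y' 0" using inj_onD[OF inj_on_tanh_shift] ex_Y_cseq[OF y] ex_Y_cseq[OF y'] by blast
  then show "y = y'" using ex_Y_cseq[OF y] ex_Y_cseq[OF y'] by metis
qed

lemma ex_S_off_orbit: "y \<in> ex_Y \<Longrightarrow> y \<notin> range ex_orb \<Longrightarrow> ex_S y = y"
  by (elim ex_Y_cases) (auto simp: ex_S_fixpoints)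

lemma tds_ex_Y: "tds ex_Y ex_S"
  by (rule tdsI[OF compact_ex_Y continuous_on_ex_S ex_S_image inj_on_ex_S])

lemma tds_ex_X: "tds ex_X (\<lambda>x. x)"
  by (rule tdsI) (simp_all add: ex_X_def)

lemma continuous_on_cutoff_apply_0: "continuous_on A (\<lambda>y::pt. cutoff (y 0))"
  unfolding cutoff_def using tanh_1_ne(3) by (intro continuous_intros) auto

lemma continuous_on_ex_f: "continuous_on (ex_X \<times> ex_Y) ex_f"
proof -
  have fst: "continuous_on (ex_X \<times> ex_Y) (\<lambda>z. fst z 0)"
    by (rule continuous_on_compose2[OF continuous_on_apply_0 continuous_on_fst[OF continuous_on_id]]) auto
  have snd: "continuous_on (ex_X \<times> ex_Y) (\<lambda>z. cutoff (snd z 0))"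
    by (rule continuous_on_compose2[OF continuous_on_cutoff_apply_0 continuous_on_snd[OF continuous_on_id]]) auto
  show ?thesis unfolding ex_f_def
    by (intro continuous_on_add continuous_on_mult continuous_on_diff continuous_on_const fst snd)
qed

lemma ex_f_cseq [simp]: "ex_f (cseq 0, y) = cutoff (y 0)" "ex_f (cseq 1, y) = 1 - cutoff (y 0)"
  by (simp_all add: ex_f_def)

lemma cutoff_ex_Y: "y \<in> ex_Y \<Longrightarrow> cutoff (y 0) = 0 \<or> cutoff (y 0) = 1"
  by (elim ex_Y_cases) (simp_all add: ex_orb_def cutoff_tanh_int cutoff_fixpoints)

lemma ex_f_nonneg: "z \<in> ex_X \<times> ex_Y \<Longrightarrow> 0 \<le> ex_f z"
  by (auto simp: ex_X_def cutoff_def)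

definition ex_section :: "pt \<Rightarrow> pt \<times> pt" where
  "ex_section y = (cseq (cutoff (y 0)), y)"

lemma ex_section_in: "y \<in> ex_Y \<Longrightarrow> ex_section y \<in> ex_X \<times> ex_Y"
  using cutoff_ex_Y[of y] by (auto simp: ex_section_def ex_X_def)

lemma ex_f_ex_section: "y \<in> ex_Y \<Longrightarrow> ex_f (ex_section y) = 0"
  using cutoff_ex_Y[of y] by (auto simp: ex_section_def)

lemma psi_ex:
  assumes \<nu>: "\<nu> \<in> inv_meas ex_Y ex_S"
  shows "psi ex_X (\<lambda>x. x) ex_Y ex_S ex_f \<nu> = 0"
proof (rule psi_eq_0_of_zero_section[OF \<nu>])
  show "continuous_on (ex_X \<times> ex_Y) (prodmap (\<lambda>x. x) ex_S)"
    by (rule continuous_on_prodmap[OF continuous_on_id continuous_on_ex_S])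
  show "prodmap (\<lambda>x. x) ex_S ` (ex_X \<times> ex_Y) \<subseteq> ex_X \<times> ex_Y"
    using ex_S_in_ex_Y by (auto simp: prodmap_def)
  show "continuous_on ex_Y ex_section"
    unfolding ex_section_def
    by (intro continuous_on_Pair continuous_on_cseq continuous_on_cutoff_apply_0 continuous_on_id)
  show "ex_section ` ex_Y \<subseteq> ex_X \<times> ex_Y" using ex_section_in by blast
  show "snd (ex_section y) = y" for y by (simp add: ex_section_def)
  have "AE y in \<nu>. y \<notin> range ex_orb"
    by (rule AE_notin_wandering_orbit[of \<nu> ex_Y ex_S ex_orb, OF \<nu> inj_on_ex_S inj_ex_orb range_ex_orb_subset ex_S_orb])
  then show "AE y in \<nu>. prodmap (\<lambda>x. x) ex_S (ex_section y) = ex_section (ex_S y)"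
    using AE_space by eventually_elim (simp add: space_inv_meas[OF \<nu>] ex_S_off_orbit prodmap_def ex_section_def)
qed (simp_all add: continuous_on_ex_f ex_f_nonneg ex_f_ex_section)

lemma alpha_ex: "alpha ex_X (\<lambda>x. x) ex_Y ex_S ex_f = 0"
proof -
  have "return (restrict_space borel ex_Y) (cseq 1) \<in> inv_meas ex_Y ex_S"
    by (rule return_in_inv_meas[OF continuous_on_ex_S]) (use ex_S_image ex_S_fixpoints in \<open>auto simp: ex_Y_def\<close>)
  then have "inv_meas ex_Y ex_S \<noteq> {}" by blast
  then show ?thesis unfolding alpha_def by (simp add: psi_ex cong: SUP_cong)
qed

section \<open>Averages in the example\<close>

abbreviation ex_avg :: "nat \<Rightarrow> pt \<times> pt \<Rightarrow> real" where
  "ex_avg k z \<equiv> avg (\<lambda>x. x) ex_S ex_f k z"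

abbreviation ex_savg :: "nat \<Rightarrow> pt \<times> pt \<Rightarrow> real" where
  "ex_savg k z \<equiv> savg ex_X (\<lambda>x. x) ex_Y ex_S ex_f k z"

lemma ex_avg_eq: "ex_avg k (x, y) = (\<Sum>j<k. ex_f (x, (ex_S ^^ j) y)) / real k"
  unfolding avg_def by (simp add: funpow_prodmap_id)

lemma ex_savg_eq:
  assumes "x \<in> ex_X" "y \<in> ex_Y"
  shows "ex_savg k (x, y) = (\<Sum>j\<in>{- int k..int k}. ex_f (x, iter_int ex_Y ex_S j y)) / real (2 * k + 1)"
  unfolding savg_def by (simp add: iter_int_prodmap_id[OF inj_on_ex_S ex_S_image assms])

lemma ex_avg_complement:
  assumes "0 < k"
  shows "ex_avg k (cseq 1, y) = 1 - ex_avg k (cseq 0, y)"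
  using assms unfolding ex_avg_eq by (simp add: sum_subtractf diff_divide_distrib)

lemma ex_savg_complement:
  assumes "y \<in> ex_Y"
  shows "ex_savg k (cseq 1, y) = 1 - ex_savg k (cseq 0, y)"
proof -
  have "real (2 * k + 1) \<noteq> 0" by simp
  then show ?thesis unfolding ex_savg_eq[OF cseq_in_ex_X(1) assms] ex_savg_eq[OF cseq_in_ex_X(2) assms]
    by (simp add: sum_subtractf diff_divide_distrib)
qed

lemma cutoff_ex_orb: "cutoff (ex_orb n 0) = (if n < 0 then 1 else 0)"
  by (simp add: ex_orb_def cutoff_tanh_int)

lemma ex_avg_orb: "ex_avg k (cseq 0, ex_orb n) = real (min k (nat (- n))) / real k"
proof -
  have "(\<Sum>j<k. if n + int j < 0 then 1 else 0) = real (card {j \<in> {..<k}. n + int j < 0})"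
    by (simp add: sum.If_cases Int_def)
  also have "{j \<in> {..<k}. n + int j < 0} = {..<min k (nat (- n))}" by auto
  finally have count: "(\<Sum>j<k. if n + int j < 0 then 1 else 0) = real (min k (nat (- n)))" by simp
  show ?thesis
    unfolding ex_avg_eq using count by (simp add: funpow_orbit[of ex_S ex_orb, OF ex_S_orb] cutoff_ex_orb)
qed

lemma ex_savg_orb:
  assumes "\<bar>n\<bar> \<le> int k"
  shows "ex_savg k (cseq 0, ex_orb n) = (real k - of_int n) / real (2 * k + 1)"
proof -
  have "(\<Sum>j\<in>{- int k..int k}. if n + j < 0 then 1 else 0) = real (card {j \<in> {- int k..int k}. n + j < 0})"
    by (simp add: sum.If_cases Int_def)
  also have "{j \<in> {- int k..int k}. n + j < 0} = {- int k..- n - 1}" using assms by auto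
  finally have count: "(\<Sum>j\<in>{- int k..int k}. if n + j < 0 then 1 else 0) = real k - of_int n"
    using assms by simp
  have orb: "ex_orb n \<in> ex_Y" using range_ex_orb_subset by blast
  show ?thesis
    unfolding ex_savg_eq[OF cseq_in_ex_X(1) orb] using count
    by (simp add: iter_int_orbit[of ex_S ex_Y ex_orb, OF inj_on_ex_S range_ex_orb_subset ex_S_orb] cutoff_ex_orb)
qed

lemma ex_avg_fixpoint:
  assumes "ex_S y = y" "0 < k"
  shows "ex_avg k (x, y) = ex_f (x, y)"
  using assms funpow_orbit[of ex_S "\<lambda>_. y"] unfolding ex_avg_eq by simp

lemma ex_savg_fixpoint:
  assumes "x \<in> ex_X" "y \<in> ex_Y" "ex_S y = y"
  shows "ex_savg k (x, y) = ex_f (x, y)"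
proof -
  have "iter_int ex_Y ex_S j y = y" for j
    using iter_int_orbit[of ex_S ex_Y "\<lambda>_. y"] inj_on_ex_S assms(2,3) by auto
  then show ?thesis unfolding ex_savg_eq[OF assms(1,2)] by (simp add: field_simps)
qed

lemma ex_avg_orb_tendsto: "(\<lambda>k. ex_avg k (cseq 0, ex_orb n)) \<longlonglongrightarrow> 0"
proof (rule tendsto_sandwich[OF _ _ tendsto_const lim_const_over_n])
  show "\<forall>\<^sub>F k in sequentially. 0 \<le> ex_avg k (cseq 0, ex_orb n)"
    by (simp add: ex_avg_orb)
  show "\<forall>\<^sub>F k in sequentially. ex_avg k (cseq 0, ex_orb n) \<le> real (nat (- n)) / real k"
    by (simp add: ex_avg_orb divide_right_mono)
qed

lemma ex_avg_complement_tendsto: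
  assumes "(\<lambda>k. ex_avg k (cseq 0, y)) \<longlonglongrightarrow> c"
  shows "(\<lambda>k. ex_avg k (cseq 1, y)) \<longlonglongrightarrow> 1 - c"
proof (rule Lim_transform_eventually)
  show "(\<lambda>k. 1 - ex_avg k (cseq 0, y)) \<longlonglongrightarrow> 1 - c" by (intro tendsto_intros assms)
  show "\<forall>\<^sub>F k in sequentially. 1 - ex_avg k (cseq 0, y) = ex_avg k (cseq 1, y)"
    using eventually_gt_at_top[of 0] by eventually_elim (simp add: ex_avg_complement)
qed

lemma ex_avg_limits:
  assumes "y \<in> ex_Y"
  obtains c where "c = 0 \<or> c = 1"
    and "(\<lambda>k. ex_avg k (cseq 0, y)) \<longlonglongrightarrow> c" and "(\<lambda>k. ex_avg k (cseq 1, y)) \<longlonglongrightarrow> 1 - c"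
proof -
  have "\<exists>c. (c = 0 \<or> c = 1) \<and> (\<lambda>k. ex_avg k (cseq 0, y)) \<longlonglongrightarrow> c"
  proof (cases "y \<in> range ex_orb")
    case True
    then show ?thesis using ex_avg_orb_tendsto by blast
  next
    case False
    have "\<forall>\<^sub>F k in sequentially. ex_avg k (cseq 0, y) = cutoff (y 0)"
      using eventually_gt_at_top[of 0]
      by eventually_elim (simp add: ex_avg_fixpoint ex_S_off_orbit assms False)
    then show ?thesis using cutoff_ex_Y[OF assms] by (blast intro: tendsto_eventually)
  qed
  then show ?thesis using ex_avg_complement_tendsto that by blast
qed

lemma ex_savg_orb_tendsto: "(\<lambda>k. ex_savg k (cseq 0, ex_orb n)) \<longlonglongrightarrow> 1/2"
proof (rule Lim_transform_eventually)
  show "(\<lambda>k. (real k - of_int n) / real (2 * k + 1)) \<longlonglongrightarrow> 1/2" by real_asymp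
  show "\<forall>\<^sub>F k in sequentially. (real k - of_int n) / real (2 * k + 1) = ex_savg k (cseq 0, ex_orb n)"
    using eventually_ge_at_top[of "nat \<bar>n\<bar>"] by eventually_elim (simp add: ex_savg_orb)
qed

lemma ex_savg_limits:
  assumes "y \<in> ex_Y"
  obtains c where "(\<lambda>k. ex_savg k (cseq 0, y)) \<longlonglongrightarrow> c" and "(\<lambda>k. ex_savg k (cseq 1, y)) \<longlonglongrightarrow> 1 - c"
    and "y \<in> range ex_orb \<Longrightarrow> c = 1/2"
proof -
  have "\<exists>c. (\<lambda>k. ex_savg k (cseq 0, y)) \<longlonglongrightarrow> c \<and> (y \<in> range ex_orb \<longrightarrow> c = 1/2)"
  proof (cases "y \<in> range ex_orb")
    case True
    then show ?thesis using ex_savg_orb_tendsto by blast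
  next
    case False
    then have "(\<lambda>k. ex_savg k (cseq 0, y)) \<longlonglongrightarrow> cutoff (y 0)"
      using assms by (simp add: ex_savg_fixpoint ex_S_off_orbit)
    then show ?thesis using False by blast
  qed
  then obtain c where c: "(\<lambda>k. ex_savg k (cseq 0, y)) \<longlonglongrightarrow> c" "y \<in> range ex_orb \<longrightarrow> c = 1/2"
    by blast
  have "(\<lambda>k. ex_savg k (cseq 1, y)) \<longlonglongrightarrow> 1 - c"
    unfolding ex_savg_complement[OF assms] by (intro tendsto_intros c(1))
  with c show ?thesis using that by blast
qed

lemma ex_Inf_fiber:
  fixes F :: "pt \<times> pt \<Rightarrow> real"
  shows "y \<in> ex_Y \<Longrightarrow> Inf (F ` {z \<in> ex_X \<times> ex_Y. snd z = y}) = min (F (cseq 0, y)) (F (cseq 1, y))"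
  unfolding ex_X_def by (rule Inf_fiber_two_points)

lemma ex_Inf_fiber_le_half:
  fixes F :: "pt \<times> pt \<Rightarrow> real"
  assumes "y \<in> ex_Y" and "F (cseq 0, y) + F (cseq 1, y) \<le> 1"
  shows "Inf (F ` {z \<in> ex_X \<times> ex_Y. snd z = y}) \<le> 1/2"
  using assms(2) by (simp add: ex_Inf_fiber[OF assms(1)] min_def)

lemma ex_SUP_Inf_fiber_le_half:
  fixes F :: "pt \<times> pt \<Rightarrow> real"
  assumes "\<And>y. y \<in> ex_Y \<Longrightarrow> F (cseq 0, y) + F (cseq 1, y) \<le> 1"
  shows "(SUP y\<in>ex_Y. Inf (F ` {z \<in> ex_X \<times> ex_Y. snd z = y})) \<le> 1/2"
proof (rule cSUP_least)
  show "ex_Y \<noteq> {}" by (simp add: ex_Y_def)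
qed (rule ex_Inf_fiber_le_half[OF _ assms])

lemma ex_SUP_Inf_fiber_ge:
  fixes F :: "pt \<times> pt \<Rightarrow> real"
  assumes "\<And>y. y \<in> ex_Y \<Longrightarrow> F (cseq 0, y) + F (cseq 1, y) \<le> 1" and "y \<in> ex_Y"
  shows "min (F (cseq 0, y)) (F (cseq 1, y)) \<le> (SUP y\<in>ex_Y. Inf (F ` {z \<in> ex_X \<times> ex_Y. snd z = y}))"
proof -
  have "bdd_above ((\<lambda>y. Inf (F ` {z \<in> ex_X \<times> ex_Y. snd z = y})) ` ex_Y)"
    by (rule bdd_aboveI2[where M = "1/2"]) (rule ex_Inf_fiber_le_half[OF _ assms(1)])
  then have "Inf (F ` {z \<in> ex_X \<times> ex_Y. snd z = y}) \<le> (SUP y\<in>ex_Y. Inf (F ` {z \<in> ex_X \<times> ex_Y. snd z = y}))"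
    by (rule cSUP_upper[OF assms(2)])
  then show ?thesis by (simp add: ex_Inf_fiber[OF assms(2)])
qed

lemma ex_avg_convergent: "z \<in> ex_X \<times> ex_Y \<Longrightarrow> convergent (\<lambda>k. ex_avg k z)"
  by (elim SigmaE ex_avg_limits) (auto simp: ex_X_def intro: convergentI)

lemma ex_savg_convergent: "z \<in> ex_X \<times> ex_Y \<Longrightarrow> convergent (\<lambda>k. ex_savg k z)"
  by (elim SigmaE ex_savg_limits) (auto simp: ex_X_def intro: convergentI)

lemma ex_SUP_Inf_lim_avg:
  "(SUP y\<in>ex_Y. INF z\<in>{z \<in> ex_X \<times> ex_Y. snd z = y}. lim (\<lambda>k. ex_avg k z)) = 0"
proof -
  have "(INF z\<in>{z \<in> ex_X \<times> ex_Y. snd z = y}. lim (\<lambda>k. ex_avg k z)) = 0" if y: "y \<in> ex_Y" for y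
  proof -
    obtain c where "c = 0 \<or> c = 1" "(\<lambda>k. ex_avg k (cseq 0, y)) \<longlonglongrightarrow> c"
      "(\<lambda>k. ex_avg k (cseq 1, y)) \<longlonglongrightarrow> 1 - c"
      using ex_avg_limits[OF y] by blast
    then show ?thesis by (auto simp: ex_Inf_fiber[OF y] limI)
  qed
  moreover have "ex_Y \<noteq> {}" by (simp add: ex_Y_def)
  ultimately show ?thesis by (simp cong: SUP_cong)
qed

lemma ex_SUP_Inf_lim_savg:
  "(SUP y\<in>ex_Y. INF z\<in>{z \<in> ex_X \<times> ex_Y. snd z = y}. lim (\<lambda>k. ex_savg k z)) = 1/2"
proof (rule antisym)
  have sum: "lim (\<lambda>k. ex_savg k (cseq 0, y)) + lim (\<lambda>k. ex_savg k (cseq 1, y)) = 1" if "y \<in> ex_Y" for y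
    by (rule ex_savg_limits[OF that]) (simp add: limI)
  then show "(SUP y\<in>ex_Y. INF z\<in>{z \<in> ex_X \<times> ex_Y. snd z = y}. lim (\<lambda>k. ex_savg k z)) \<le> 1/2"
    by (intro ex_SUP_Inf_fiber_le_half) simp
  have orb: "ex_orb 0 \<in> ex_Y" using range_ex_orb_subset by blast
  obtain c where "(\<lambda>k. ex_savg k (cseq 0, ex_orb 0)) \<longlonglongrightarrow> c"
    "(\<lambda>k. ex_savg k (cseq 1, ex_orb 0)) \<longlonglongrightarrow> 1 - c" "c = 1/2"
    by (rule ex_savg_limits[OF orb]) auto
  then have "1/2 = min (lim (\<lambda>k. ex_savg k (cseq 0, ex_orb 0))) (lim (\<lambda>k. ex_savg k (cseq 1, ex_orb 0)))"
    by (simp add: limI)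
  also have "\<dots> \<le> (SUP y\<in>ex_Y. INF z\<in>{z \<in> ex_X \<times> ex_Y. snd z = y}. lim (\<lambda>k. ex_savg k z))"
    using sum by (intro ex_SUP_Inf_fiber_ge orb) simp
  finally show "1/2 \<le> \<dots>" .
qed

(* Not an equality: the average over the empty window k = 0 is 0. *)
lemma ex_avg_sum_le_1: "ex_avg k (cseq 0, y) + ex_avg k (cseq 1, y) \<le> 1"
proof (cases "k = 0")
  case True
  then show ?thesis by (simp add: avg_def)
next
  case False
  then show ?thesis using ex_avg_complement[of k y] by simp
qed

lemma delta_ex: "delta ex_X (\<lambda>x. x) ex_Y ex_S ex_f = 1/2"
  unfolding delta_def
proof (rule limsup_r_eq_of_subseq[where r = "\<lambda>m. 2 * Suc m" and l = "\<lambda>_. 1/2"])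
  show "(SUP y\<in>ex_Y. INF z\<in>{z \<in> ex_X \<times> ex_Y. snd z = y}. ex_avg k z) \<le> 1/2" for k
    by (rule ex_SUP_Inf_fiber_le_half) (rule ex_avg_sum_le_1)
  show "strict_mono (\<lambda>m::nat. 2 * Suc m)" by (rule strict_monoI) simp
  show "(\<lambda>_. 1/2) \<longlonglongrightarrow> (1/2 :: real)" by simp
  fix m
  let ?y = "ex_orb (- int (Suc m))"
  have half: "ex_avg (2 * Suc m) (cseq 0, ?y) = 1/2" by (simp add: ex_avg_orb)
  have "1/2 = min (ex_avg (2 * Suc m) (cseq 0, ?y)) (ex_avg (2 * Suc m) (cseq 1, ?y))"
    using half by (simp add: ex_avg_complement)
  also have "\<dots> \<le> (SUP y\<in>ex_Y. INF z\<in>{z \<in> ex_X \<times> ex_Y. snd z = y}. ex_avg (2 * Suc m) z)"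
    by (rule ex_SUP_Inf_fiber_ge[OF ex_avg_sum_le_1]) (use range_ex_orb_subset in blast)
  finally show "1/2 \<le> \<dots>" .
qed

lemma delta_s_ex: "delta_s ex_X (\<lambda>x. x) ex_Y ex_S ex_f = 1/2"
  unfolding delta_s_def
proof (rule limsup_r_eq_of_subseq[where r = "\<lambda>k. k" and l = "\<lambda>k. real k / real (2 * k + 1)"])
  have sum: "ex_savg k (cseq 0, y) + ex_savg k (cseq 1, y) \<le> 1" if "y \<in> ex_Y" for k y
    by (simp add: ex_savg_complement[OF that])
  show "(SUP y\<in>ex_Y. INF z\<in>{z \<in> ex_X \<times> ex_Y. snd z = y}. ex_savg k z) \<le> 1/2" for k
    by (rule ex_SUP_Inf_fiber_le_half) (rule sum)
  show "strict_mono (\<lambda>k::nat. k)" by (rule strict_monoI)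
  show "(\<lambda>k. real k / real (2 * k + 1)) \<longlonglongrightarrow> 1/2" by real_asymp
  fix k
  have orb: "ex_orb 0 \<in> ex_Y" using range_ex_orb_subset by blast
  have "real k / real (2 * k + 1) = min (ex_savg k (cseq 0, ex_orb 0)) (ex_savg k (cseq 1, ex_orb 0))"
    by (simp add: ex_savg_orb ex_savg_complement[OF orb] field_simps)
  also have "\<dots> \<le> (SUP y\<in>ex_Y. INF z\<in>{z \<in> ex_X \<times> ex_Y. snd z = y}. ex_savg k z)"
    by (rule ex_SUP_Inf_fiber_ge[OF sum orb])
  finally show "real k / real (2 * k + 1) \<le> \<dots>" .
qed

lemma beta_ex: "beta ex_X (\<lambda>x. x) ex_Y ex_S ex_f = 0"
  by (simp add: beta_eq_Sup_Inf_lim[OF ex_X_nonempty] ex_avg_convergent ex_SUP_Inf_lim_avg)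

lemma gamma_ex: "gamma ex_X (\<lambda>x. x) ex_Y ex_S ex_f = 0"
  by (simp add: gamma_eq_Sup_Inf_lim ex_avg_convergent ex_SUP_Inf_lim_avg)

lemma beta_s_ex: "beta_s ex_X (\<lambda>x. x) ex_Y ex_S ex_f = 1/2"
  by (simp add: beta_s_eq_Sup_Inf_lim[OF ex_X_nonempty] ex_savg_convergent ex_SUP_Inf_lim_savg)

lemma gamma_s_ex: "gamma_s ex_X (\<lambda>x. x) ex_Y ex_S ex_f = 1/2"
  by (simp add: gamma_s_eq_Sup_Inf_lim ex_savg_convergent ex_SUP_Inf_lim_savg)

theorem proposition1p11:
  shows "\<exists>(X::pt set) (T::pt \<Rightarrow> pt) (Y::pt set) (S::pt \<Rightarrow> pt) (f::pt \<times> pt \<Rightarrow> real).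
    tds X T \<and> tds Y S \<and> continuous_on (X \<times> Y) f \<and>
    alpha X T Y S f = beta X T Y S f \<and> beta X T Y S f = gamma X T Y S f \<and>
    gamma X T Y S f < delta X T Y S f \<and>
    alpha X T Y S f < beta_s X T Y S f \<and> beta_s X T Y S f = gamma_s X T Y S f \<and>
    gamma_s X T Y S f = delta_s X T Y S f \<and> delta_s X T Y S f = delta X T Y S f"
  by (intro exI[of _ ex_X] exI[of _ "\<lambda>x. x"] exI[of _ ex_Y] exI[of _ ex_S] exI[of _ ex_f])
    (simp add: tds_ex_X tds_ex_Y continuous_on_ex_f
      alpha_ex beta_ex gamma_ex delta_ex beta_s_ex gamma_s_ex delta_s_ex)

end
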